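(* For every rpoNFA $\mathcal{A}$, the language $L(\mathcal{A})$ is DRE definable, i.e., there exists a deterministic regular expression $r$ with $L(r)=L(\mathcal{A})$.
   Context: A poNFA is an NFA whose reachability relation ($p\le q$ iff $q\in p\cdot w$ for some word $w$) is a partial order; an rpoNFA is a poNFA such that for every state $q$ and letter $a$, $q\in q\cdot a$ implies $q\cdot a=\{q\}$. Regular expressions over $\Sigma$ are built from $\emptyset$, $\varepsilon$, letters $a\in\Sigma$ by concatenation, union $+$ and Kleene star, with the usual semantics. For a regular expression $r$, let $\overline{r}$ be obtained by replacing the $i$-th occurrence of each letter $a$ in $r$ by a fresh marked letter $a_i$. The expression $r$ is deterministic (one-unambiguous) if there are no words $wa_iv$ and $wa_jv'$ in $L(\overline{r})$ with $i\neq j$. A regular language is DRE definable if some deterministic regular expression defines it. *)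

theory Defs
  imports Main
begin

datatype 'a rexp = Zero | One | Atom 'a | Times "'a rexp" "'a rexp" | Plus "'a rexp" "'a rexp" | Star "'a rexp"

definition conc :: "'a list set \<Rightarrow> 'a list set \<Rightarrow> 'a list set" where
  "conc A B = {u @ v | u v. u \<in> A \<and> v \<in> B}"

inductive_set star_lang :: "'a list set \<Rightarrow> 'a list set" for A where
  star_Nil: "[] \<in> star_lang A"
| star_app: "u \<in> A \<Longrightarrow> v \<in> star_lang A \<Longrightarrow> u @ v \<in> star_lang A"

fun lang :: "'a rexp \<Rightarrow> 'a list set" where
  "lang Zero = {}"
| "lang One = {[]}"
| "lang (Atom a) = {[a]}"
| "lang (Times r s) = conc (lang r) (lang s)"
| "lang (Plus r s) = lang r \<union> lang s"
| "lang (Star r) = star_lang (lang r)"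

fun atoms :: "'a rexp \<Rightarrow> 'a set" where
  "atoms Zero = {}"
| "atoms One = {}"
| "atoms (Atom a) = {a}"
| "atoms (Times r s) = atoms r \<union> atoms s"
| "atoms (Plus r s) = atoms r \<union> atoms s"
| "atoms (Star r) = atoms r"

text \<open>Marking: the i-th occurrence (from the left, counting from 1) of letter a
  becomes the marked letter (a, i). The counter c records how many occurrences
  of each letter have been seen so far.\<close>
fun mark_aux :: "('a \<Rightarrow> nat) \<Rightarrow> 'a rexp \<Rightarrow> ('a \<times> nat) rexp \<times> ('a \<Rightarrow> nat)" where
  "mark_aux c Zero = (Zero, c)"
| "mark_aux c One = (One, c)"
| "mark_aux c (Atom a) = (Atom (a, Suc (c a)), c(a := Suc (c a)))"
| "mark_aux c (Times r s) =
     (let (r', c1) = mark_aux c r; (s', c2) = mark_aux c1 s in (Times r' s', c2))"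
| "mark_aux c (Plus r s) =
     (let (r', c1) = mark_aux c r; (s', c2) = mark_aux c1 s in (Plus r' s', c2))"
| "mark_aux c (Star r) = (let (r', c1) = mark_aux c r in (Star r', c1))"

definition mark :: "'a rexp \<Rightarrow> ('a \<times> nat) rexp" where
  "mark r = fst (mark_aux (\<lambda>_. 0) r)"

definition deterministic :: "'a rexp \<Rightarrow> bool" where
  "deterministic r \<longleftrightarrow>
     \<not> (\<exists>w a i j v v'. w @ [(a, i)] @ v \<in> lang (mark r) \<and>
                        w @ [(a, j)] @ v' \<in> lang (mark r) \<and> i \<noteq> j)"

definition DRE_definable :: "'a set \<Rightarrow> 'a list set \<Rightarrow> bool" where
  "DRE_definable \<Sigma> L \<longleftrightarrow> (\<exists>r. atoms r \<subseteq> \<Sigma> \<and> deterministic r \<and> lang r = L)"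

record ('q, 'a) nfa =
  states :: "'q set"
  alph :: "'a set"
  trans :: "'q \<Rightarrow> 'a \<Rightarrow> 'q set"
  init :: "'q set"
  final :: "'q set"

definition is_nfa :: "('q, 'a) nfa \<Rightarrow> bool" where
  "is_nfa A \<longleftrightarrow> finite (states A) \<and> finite (alph A) \<and>
     init A \<subseteq> states A \<and> final A \<subseteq> states A \<and>
     (\<forall>q \<in> states A. \<forall>a \<in> alph A. trans A q a \<subseteq> states A)"

fun steps :: "('q, 'a) nfa \<Rightarrow> 'q set \<Rightarrow> 'a list \<Rightarrow> 'q set" where
  "steps A S [] = S"
| "steps A S (a # w) = steps A (\<Union>q\<in>S. trans A q a) w"

definition nfa_lang :: "('q, 'a) nfa \<Rightarrow> 'a list set" where
  "nfa_lang A = {w \<in> lists (alph A). steps A (init A) w \<inter> final A \<noteq> {}}"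

definition reach :: "('q, 'a) nfa \<Rightarrow> 'q \<Rightarrow> 'q \<Rightarrow> bool" where
  "reach A p q \<longleftrightarrow> (\<exists>w \<in> lists (alph A). q \<in> steps A {p} w)"

definition poNFA :: "('q, 'a) nfa \<Rightarrow> bool" where
  "poNFA A \<longleftrightarrow> is_nfa A \<and>
     (\<forall>p \<in> states A. reach A p p) \<and>
     (\<forall>p \<in> states A. \<forall>q \<in> states A. \<forall>r \<in> states A. reach A p q \<and> reach A q r \<longrightarrow> reach A p r) \<and>
     (\<forall>p \<in> states A. \<forall>q \<in> states A. reach A p q \<and> reach A q p \<longrightarrow> p = q)"

definition rpoNFA :: "('q, 'a) nfa \<Rightarrow> bool" where
  "rpoNFA A \<longleftrightarrow> poNFA A \<and>
     (\<forall>q \<in> states A. \<forall>a \<in> alph A. q \<in> trans A q a \<longrightarrow> trans A q a = {q})"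

end

theory Submission
  imports Defs
begin

text \<open>Determinise A by the subset construction. In an rpoNFA a letter either fixes a state
  or moves it to states strictly above it in the reachability order, so every transition that
  changes the current set S lowers the potential of S, the sum over its states q of
  (N+1)^(number of states above q). Hence along any word the set changes at most
  potential(init A) times, and the subset automaton unrolls into a finite expression: at each
  set, a star over the letters fixing it, followed by a sum of the other letters, each guarding
  the expression for the next set. These letters are pairwise distinct, so the first letter of
  any continuation of a marked prefix identifies its occurrence, i.e. the expression is
  deterministic.\<close>

lemma mark_aux_Times [simp]:
  "mark_aux c (Times r s) =
     (Times (fst (mark_aux c r)) (fst (mark_aux (snd (mark_aux c r)) s)),
      snd (mark_aux (snd (mark_aux c r)) s))"
  by (simp add: split_def Let_def)

lemma mark_aux_Plus [simp]:
  "mark_aux c (Plus r s) =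
     (Plus (fst (mark_aux c r)) (fst (mark_aux (snd (mark_aux c r)) s)),
      snd (mark_aux (snd (mark_aux c r)) s))"
  by (simp add: split_def Let_def)

lemma mark_aux_Star [simp]: "mark_aux c (Star r) = (Star (fst (mark_aux c r)), snd (mark_aux c r))"
  by (simp add: split_def Let_def)

declare mark_aux.simps(4-6) [simp del]

lemma conc_iff: "x \<in> conc A B \<longleftrightarrow> (\<exists>u v. x = u @ v \<and> u \<in> A \<and> v \<in> B)"
  by (auto simp: conc_def)

lemma map_fst_in_lang_mark_aux: "w \<in> lang (fst (mark_aux c r)) \<Longrightarrow> map fst w \<in> lang r"
proof (induction r arbitrary: c w)
  case (Times r s)
  then show ?case by (fastforce simp: conc_iff)
next
  case (Star r)
  have "u \<in> star_lang (lang (fst (mark_aux c r))) \<Longrightarrow> map fst u \<in> star_lang (lang r)" for u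
    by (induction rule: star_lang.induct) (auto intro: star_lang.intros Star.IH)
  with Star.prems show ?case by simp
qed auto

lemma lang_subset_lists_atoms: "lang r \<subseteq> lists (atoms r)"
proof (induction r)
  case (Star r)
  have "u \<in> star_lang (lang r) \<Longrightarrow> u \<in> lists (atoms r)" for u
    by (induction rule: star_lang.induct) (use Star.IH in auto)
  then show ?case by auto
qed (fastforce simp: conc_iff)+

lemma Cons_in_conc_star_lang_iff:
  assumes "\<And>u. u \<in> B \<Longrightarrow> length u = 1"
  shows "p # x \<in> conc (star_lang B) R \<longleftrightarrow> p # x \<in> R \<or> [p] \<in> B \<and> x \<in> conc (star_lang B) R"
proof
  assume "p # x \<in> conc (star_lang B) R"
  then obtain u v where uv: "p # x = u @ v" "u \<in> star_lang B" "v \<in> R"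
    by (auto simp: conc_iff)
  from uv(2) show "p # x \<in> R \<or> [p] \<in> B \<and> x \<in> conc (star_lang B) R"
  proof cases
    case star_Nil
    with uv show ?thesis by simp
  next
    case (star_app u1 u2)
    with assms obtain q where "u1 = [q]" by (metis length_0_conv length_Suc_conv One_nat_def)
    with star_app uv show ?thesis by (auto simp: conc_iff)
  qed
next
  assume "p # x \<in> R \<or> [p] \<in> B \<and> x \<in> conc (star_lang B) R"
  then show "p # x \<in> conc (star_lang B) R"
  proof
    assume "p # x \<in> R"
    then show ?thesis
      unfolding conc_iff by (metis append_Nil star_lang.star_Nil)
  next
    assume "[p] \<in> B \<and> x \<in> conc (star_lang B) R"
    then obtain u v where "[p] \<in> B" "x = u @ v" "u \<in> star_lang B" "v \<in> R"
      by (auto simp: conc_iff)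
    moreover from this have "[p] @ u \<in> star_lang B" by (blast intro: star_lang.star_app)
    ultimately show ?thesis
      unfolding conc_iff by (metis append_Cons append_Nil)
  qed
qed

fun guarded_sum :: "'a list \<Rightarrow> ('a \<Rightarrow> 'a rexp) \<Rightarrow> 'a rexp" where
  "guarded_sum [] g = Zero"
| "guarded_sum (a # as) g = Plus (Times (Atom a) (g a)) (guarded_sum as g)"

lemma lang_guarded_sum: "lang (guarded_sum as g) = (\<Union>a\<in>set as. conc {[a]} (lang (g a)))"
  by (induction as) auto

lemma atoms_guarded_sum: "atoms (guarded_sum as g) = (\<Union>a\<in>set as. insert a (atoms (g a)))"
  by (induction as) auto

lemma Cons_in_lang_mark_guarded_sum:
  assumes "distinct as" "(a, i) # x \<in> lang (fst (mark_aux c (guarded_sum as g)))"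
  shows "a \<in> set as \<and> (\<exists>c'. \<forall>j y. (a, j) # y \<in> lang (fst (mark_aux c (guarded_sum as g))) \<longrightarrow>
           j = i \<and> y \<in> lang (fst (mark_aux c' (g a))))"
  using assms
proof (induction as arbitrary: c)
  case Nil
  then show ?case by simp
next
  case (Cons b bs)
  let ?G = "\<lambda>c. lang (fst (mark_aux c (guarded_sum bs g)))"
  have G_first: "fst q \<in> set bs" if "q # z \<in> ?G c'" for q z c'
    using map_fst_in_lang_mark_aux[OF that] by (auto simp: lang_guarded_sum conc_iff)
  show ?case
  proof (cases "a = b")
    case True
    have not_G: "(b, k) # z \<notin> ?G c'" for k z c'
      using Cons.prems(1) G_first by fastforce
    have "(a, j) # y \<in> lang (fst (mark_aux c (guarded_sum (b # bs) g))) \<longleftrightarrow>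
          j = Suc (c b) \<and> y \<in> lang (fst (mark_aux (c(b := Suc (c b))) (g a)))" for j y
      using True not_G by (auto simp: conc_iff)
    with Cons.prems(2) True show ?thesis by auto
  next
    case False
    define c1 where "c1 = snd (mark_aux c (Times (Atom b) (g b)))"
    have "(a, k) # z \<in> lang (fst (mark_aux c (guarded_sum (b # bs) g))) \<longleftrightarrow> (a, k) # z \<in> ?G c1"
      for k z
      using False by (simp add: c1_def conc_iff)
    with Cons.IH[of c1] Cons.prems show ?thesis by auto
  qed
qed

definition lquot :: "'a \<Rightarrow> 'a list set \<Rightarrow> 'a list set" where
  "lquot p L = {x. p # x \<in> L}"

lemma lquot_lang_mark_guarded_sum:
  assumes "distinct as"
  obtains c' where "lquot (a, i) (lang (fst (mark_aux c (guarded_sum as g)))) \<subseteq> lang (fst (mark_aux c' (g a)))"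
proof (cases "lquot (a, i) (lang (fst (mark_aux c (guarded_sum as g)))) = {}")
  case True
  then show ?thesis using that by blast
next
  case False
  then obtain x where "(a, i) # x \<in> lang (fst (mark_aux c (guarded_sum as g)))"
    by (auto simp: lquot_def)
  from Cons_in_lang_mark_guarded_sum[OF assms this] that show ?thesis
    by (auto simp: lquot_def)
qed

definition deterministic_lang :: "('a \<times> nat) list set \<Rightarrow> bool" where
  "deterministic_lang L \<longleftrightarrow>
     \<not> (\<exists>w a i j v v'. w @ [(a, i)] @ v \<in> L \<and> w @ [(a, j)] @ v' \<in> L \<and> i \<noteq> j)"

lemma deterministic_iff_deterministic_lang: "deterministic r \<longleftrightarrow> deterministic_lang (lang (mark r))"
  by (simp add: deterministic_def deterministic_lang_def)

lemma deterministic_lang_subset: "M \<subseteq> L \<Longrightarrow> deterministic_lang L \<Longrightarrow> deterministic_lang M"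
  unfolding deterministic_lang_def by blast

lemma deterministic_langI:
  assumes first: "\<And>a i j x y. (a, i) # x \<in> L \<Longrightarrow> (a, j) # y \<in> L \<Longrightarrow> i = j"
    and lquot: "\<And>p. lquot p L \<subseteq> L \<or> deterministic_lang (lquot p L)"
  shows "deterministic_lang L"
proof -
  have "\<forall>v v'. w @ (a, i) # v \<in> L \<longrightarrow> w @ (a, j) # v' \<in> L \<longrightarrow> i = j" for w a i j
  proof (induction w)
    case Nil
    then show ?case using first by simp
  next
    case (Cons p w)
    show ?case
    proof (intro allI impI)
      fix v v' assume "(p # w) @ (a, i) # v \<in> L" "(p # w) @ (a, j) # v' \<in> L"
      then have "w @ (a, i) # v \<in> lquot p L" "w @ (a, j) # v' \<in> lquot p L"
        by (simp_all add: lquot_def)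
      with lquot[of p] Cons.IH show "i = j"
        unfolding deterministic_lang_def by (metis append_Cons append_Nil subsetD)
    qed
  qed
  then show ?thesis unfolding deterministic_lang_def by (metis append_Cons append_Nil)
qed

lemma deterministic_lang_conc_star_lang:
  assumes B: "\<And>u. u \<in> B \<Longrightarrow> \<exists>p. u = [p] \<and> fst p \<in> Bl"
    and B_first: "\<And>b i j. [(b, i)] \<in> B \<Longrightarrow> [(b, j)] \<in> B \<Longrightarrow> i = j"
    and R_first_notin: "\<And>p x. p # x \<in> R \<Longrightarrow> fst p \<notin> Bl"
    and R_first: "\<And>a i j x y. (a, i) # x \<in> R \<Longrightarrow> (a, j) # y \<in> R \<Longrightarrow> i = j"
    and R_lquot: "\<And>p. deterministic_lang (lquot p R)"
  shows "deterministic_lang (conc (star_lang B) R)"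
proof (rule deterministic_langI)
  let ?L = "conc (star_lang B) R"
  have Cons_in_L: "p # x \<in> ?L \<longleftrightarrow> p # x \<in> R \<or> [p] \<in> B \<and> x \<in> ?L" for p x
    by (rule Cons_in_conc_star_lang_iff) (use B in fastforce)
  show "i = j" if "(a, i) # x \<in> ?L" "(a, j) # y \<in> ?L" for a i j x y
  proof (cases "a \<in> Bl")
    case True
    with that Cons_in_L R_first_notin have "[(a, i)] \<in> B" "[(a, j)] \<in> B" by fastforce+
    then show ?thesis by (rule B_first)
  next
    case False
    with that Cons_in_L B have "(a, i) # x \<in> R" "(a, j) # y \<in> R" by fastforce+
    then show ?thesis by (rule R_first)
  qed
  show "lquot p ?L \<subseteq> ?L \<or> deterministic_lang (lquot p ?L)" for p
  proof (cases "fst p \<in> Bl")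
    case True
    with Cons_in_L R_first_notin have "lquot p ?L \<subseteq> ?L" by (fastforce simp: lquot_def)
    then show ?thesis ..
  next
    case False
    with Cons_in_L B have "lquot p ?L = lquot p R" by (fastforce simp: lquot_def)
    with R_lquot show ?thesis by simp
  qed
qed

definition nfa_step :: "('q, 'a) nfa \<Rightarrow> 'q set \<Rightarrow> 'a \<Rightarrow> 'q set" where
  "nfa_step A S a = (\<Union>q\<in>S. trans A q a)"

lemma steps_Cons_nfa_step: "steps A S (a # w) = steps A (nfa_step A S a) w"
  by (simp add: nfa_step_def)

definition loop_letters :: "('q, 'a) nfa \<Rightarrow> 'q set \<Rightarrow> 'a set" where
  "loop_letters A S = {a \<in> alph A. nfa_step A S a = S}"

definition exit_letters :: "('q, 'a) nfa \<Rightarrow> 'q set \<Rightarrow> 'a set" where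
  "exit_letters A S = {a \<in> alph A. nfa_step A S a \<noteq> S}"

definition distinct_list_of :: "'a set \<Rightarrow> 'a list" where
  "distinct_list_of X = (SOME xs. distinct xs \<and> set xs = X)"

lemma distinct_list_of:
  assumes "finite X"
  shows "distinct (distinct_list_of X)" "set (distinct_list_of X) = X"
proof -
  have "\<exists>xs. distinct xs \<and> set xs = X"
    using finite_distinct_list[OF assms] by blast
  from someI_ex[OF this] show "distinct (distinct_list_of X)" "set (distinct_list_of X) = X"
    unfolding distinct_list_of_def by simp_all
qed

primrec subset_rexp :: "('q, 'a) nfa \<Rightarrow> nat \<Rightarrow> 'q set \<Rightarrow> 'a rexp" where
  "subset_rexp A 0 S = Zero"
| "subset_rexp A (Suc n) S =
     Times (Star (guarded_sum (distinct_list_of (loop_letters A S)) (\<lambda>_. One)))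
       (Plus (if S \<inter> final A = {} then Zero else One)
         (guarded_sum (distinct_list_of (exit_letters A S)) (\<lambda>a. subset_rexp A n (nfa_step A S a))))"

lemma atoms_subset_rexp: "finite (alph A) \<Longrightarrow> atoms (subset_rexp A n S) \<subseteq> alph A"
proof (induction n arbitrary: S)
  case (Suc n)
  then show ?case
    by (auto simp: atoms_guarded_sum distinct_list_of loop_letters_def exit_letters_def)
qed simp

lemma deterministic_lang_mark_subset_rexp:
  "finite (alph A) \<Longrightarrow> deterministic_lang (lang (fst (mark_aux c (subset_rexp A n S))))"
proof (induction n arbitrary: S c)
  case 0
  then show ?case by (simp add: deterministic_lang_def)
next
  case (Suc n)
  let ?bs = "distinct_list_of (loop_letters A S)"
  let ?as = "distinct_list_of (exit_letters A S)"
  let ?F = "if S \<inter> final A = {} then Zero else One :: 'a rexp"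
  let ?g = "\<lambda>a. subset_rexp A n (nfa_step A S a)"
  define c1 where "c1 = snd (mark_aux c (Star (guarded_sum ?bs (\<lambda>_. One))))"
  define c2 where "c2 = snd (mark_aux c1 ?F)"
  define B where "B = lang (fst (mark_aux c (guarded_sum ?bs (\<lambda>_. One))))"
  define G where "G = lang (fst (mark_aux c2 (guarded_sum ?as ?g)))"
  define R where "R = lang (fst (mark_aux c1 ?F)) \<union> G"
  have lang_eq: "lang (fst (mark_aux c (subset_rexp A (Suc n) S))) = conc (star_lang B) R"
    by (simp add: B_def G_def R_def c1_def c2_def)
  have bs: "distinct ?bs" "set ?bs = loop_letters A S"
    and as: "distinct ?as" "set ?as = exit_letters A S"
    using Suc.prems by (simp_all add: distinct_list_of loop_letters_def exit_letters_def)
  have R_Cons: "p # x \<in> R \<longleftrightarrow> p # x \<in> G" for p x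
    by (auto simp: R_def)
  show ?case
    unfolding lang_eq
  proof (rule deterministic_lang_conc_star_lang[where Bl = "loop_letters A S"])
    fix u assume "u \<in> B"
    then have "map fst u \<in> lang (guarded_sum ?bs (\<lambda>_. One))"
      unfolding B_def by (rule map_fst_in_lang_mark_aux)
    then show "\<exists>p. u = [p] \<and> fst p \<in> loop_letters A S"
      using bs(2) by (cases u) (auto simp: lang_guarded_sum conc_iff)
  next
    show "i = j" if "[(b, i)] \<in> B" "[(b, j)] \<in> B" for b i j
      using Cons_in_lang_mark_guarded_sum[OF bs(1) that(1)[unfolded B_def]] that(2) B_def by auto
  next
    show "fst p \<notin> loop_letters A S" if "p # x \<in> R" for p x
      using that Cons_in_lang_mark_guarded_sum[OF as(1), of "fst p" "snd p" x c2 ?g] as(2)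
      by (auto simp: R_Cons G_def loop_letters_def exit_letters_def)
  next
    show "i = j" if "(a, i) # x \<in> R" "(a, j) # y \<in> R" for a i j x y
      using that Cons_in_lang_mark_guarded_sum[OF as(1), of a i x c2 ?g]
      by (auto simp: R_Cons G_def)
  next
    fix p :: "'a \<times> nat"
    obtain a i where p: "p = (a, i)" by fastforce
    obtain c' where "lquot p G \<subseteq> lang (fst (mark_aux c' (?g a)))"
      using lquot_lang_mark_guarded_sum[OF as(1)] unfolding p G_def by blast
    moreover have "lquot p R = lquot p G" by (auto simp: lquot_def R_Cons)
    ultimately show "deterministic_lang (lquot p R)"
      using Suc.IH[OF Suc.prems] by (metis deterministic_lang_subset)
  qed
qed

fun exit_count :: "('q, 'a) nfa \<Rightarrow> 'q set \<Rightarrow> 'a list \<Rightarrow> nat" where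
  "exit_count A S [] = 0"
| "exit_count A S (a # w) =
     (if nfa_step A S a = S then 0 else 1) + exit_count A (nfa_step A S a) w"

lemma lang_subset_rexp:
  assumes "finite (alph A)" "w \<in> lists (alph A)"
  shows "w \<in> lang (subset_rexp A n S) \<longleftrightarrow> steps A S w \<inter> final A \<noteq> {} \<and> exit_count A S w < n"
  using assms(2)
proof (induction n arbitrary: S w)
  case 0
  then show ?case by simp
next
  case (Suc n)
  let ?B = "(\<lambda>b. [b]) ` loop_letters A S"
  let ?R = "(if S \<inter> final A = {} then {} else {[]}) \<union>
     (\<Union>a\<in>exit_letters A S. conc {[a]} (lang (subset_rexp A n (nfa_step A S a))))"
  have lang_eq: "lang (subset_rexp A (Suc n) S) = conc (star_lang ?B) ?R"
  proof -
    have "conc {[b]} {[]} = {[b]}" for b :: 'a by (simp add: conc_def)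
    then show ?thesis using assms(1)
      by (simp add: lang_guarded_sum distinct_list_of loop_letters_def exit_letters_def UNION_singleton_eq_range)
  qed
  have Cons_in: "a # w \<in> conc (star_lang ?B) ?R \<longleftrightarrow> a # w \<in> ?R \<or> [a] \<in> ?B \<and> w \<in> conc (star_lang ?B) ?R"
    for a w by (rule Cons_in_conc_star_lang_iff) auto
  from Suc.prems show ?case
    unfolding lang_eq
  proof (induction w)
    case Nil
    show ?case by (auto simp: conc_iff intro: star_lang.intros)
  next
    case (Cons a w)
    then have a: "a \<in> alph A" and w: "w \<in> lists (alph A)" by auto
    show ?case
    proof (cases "nfa_step A S a = S")
      case True
      with a have "a # w \<notin> ?R" "[a] \<in> ?B"
        by (auto simp: conc_iff loop_letters_def exit_letters_def)
      with Cons_in Cons.IH w True show ?thesis by (simp add: steps_Cons_nfa_step del: steps.simps(2))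
    next
      case False
      then have "[a] \<notin> ?B" by (auto simp: loop_letters_def)
      then have "a # w \<in> conc (star_lang ?B) ?R \<longleftrightarrow> a # w \<in> ?R" by (simp add: Cons_in)
      also have "\<dots> \<longleftrightarrow> w \<in> lang (subset_rexp A n (nfa_step A S a))"
        using False a by (auto simp: conc_iff exit_letters_def)
      finally show ?thesis
        using Suc.IH[OF w] False by (simp add: steps_Cons_nfa_step del: steps.simps(2))
    qed
  qed
qed

definition states_above :: "('q, 'a) nfa \<Rightarrow> 'q \<Rightarrow> 'q set" where
  "states_above A q = {p \<in> states A. p \<noteq> q \<and> reach A q p}"

definition weight :: "('q, 'a) nfa \<Rightarrow> 'q \<Rightarrow> nat" where
  "weight A q = (card (states A) + 1) ^ card (states_above A q)"

definition potential :: "('q, 'a) nfa \<Rightarrow> 'q set \<Rightarrow> nat" where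
  "potential A S = sum (weight A) S"

lemma finite_states_above: "is_nfa A \<Longrightarrow> finite (states_above A q)"
  by (simp add: is_nfa_def states_above_def)

lemma trans_subset_states_above:
  assumes "rpoNFA A" "q \<in> states A" "a \<in> alph A" "trans A q a \<noteq> {q}"
  shows "trans A q a \<subseteq> states_above A q"
proof
  fix p assume p: "p \<in> trans A q a"
  have "is_nfa A" using assms(1) by (simp add: rpoNFA_def poNFA_def)
  with p assms(2,3) have "p \<in> states A" unfolding is_nfa_def by blast
  moreover have "p \<noteq> q"
    using p assms unfolding rpoNFA_def by blast
  moreover have "reach A q p"
    unfolding reach_def using p assms(3) by (intro bexI[of _ "[a]"]) auto
  ultimately show "p \<in> states_above A q" by (simp add: states_above_def)
qed

lemma card_states_above_less:
  assumes "poNFA A" "q \<in> states A" "p \<in> states_above A q"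
  shows "card (states_above A p) < card (states_above A q)"
proof (rule psubset_card_mono)
  show "finite (states_above A q)" using assms(1) by (simp add: poNFA_def finite_states_above)
  have "p \<in> states A" "p \<noteq> q" "reach A q p" using assms(3) by (auto simp: states_above_def)
  with assms(1,2) have "states_above A p \<subseteq> states_above A q"
    unfolding states_above_def poNFA_def by blast
  moreover have "p \<notin> states_above A p" by (simp add: states_above_def)
  ultimately show "states_above A p \<subset> states_above A q" using assms(3) by blast
qed

text \<open>At most d \<le> N states lie above q, each of weight at most (N+1)^(d-1),
  where N = card (states A) and d = card (states_above A q).\<close>
lemma sum_weight_states_above_less:
  assumes "poNFA A" "q \<in> states A"
  shows "sum (weight A) (states_above A q) < weight A q"
proof (cases "states_above A q = {}")
  case True
  then show ?thesis by (simp add: weight_def)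
next
  case False
  define N where "N = card (states A)"
  define d where "d = card (states_above A q)"
  have fin: "finite (states A)" "finite (states_above A q)"
    using assms(1) by (simp_all add: poNFA_def is_nfa_def finite_states_above)
  with False have "d > 0" by (simp add: d_def card_gt_0_iff)
  have "d \<le> N" unfolding d_def N_def using fin by (intro card_mono) (auto simp: states_above_def)
  have "weight A p \<le> (N + 1) ^ (d - 1)" if "p \<in> states_above A q" for p
    using card_states_above_less[OF assms that] unfolding weight_def N_def d_def
    by (intro power_increasing) auto
  then have "sum (weight A) (states_above A q) \<le> d * (N + 1) ^ (d - 1)"
    using sum_bounded_above[of "states_above A q" "weight A"] by (simp add: d_def)
  also have "\<dots> < (N + 1) * (N + 1) ^ (d - 1)"
    using \<open>d \<le> N\<close> by (intro mult_strict_right_mono) auto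
  also have "\<dots> = weight A q"
    using \<open>d > 0\<close> by (simp add: weight_def N_def d_def power_eq_if)
  finally show ?thesis .
qed

lemma sum_UN_le_nat:
  fixes f :: "'b \<Rightarrow> nat"
  assumes "finite I" "\<And>i. i \<in> I \<Longrightarrow> finite (B i)"
  shows "sum f (\<Union>i\<in>I. B i) \<le> (\<Sum>i\<in>I. sum f (B i))"
  using assms
proof (induction I rule: finite_induct)
  case (insert x F)
  have "sum f (\<Union>i\<in>insert x F. B i) \<le> sum f (B x) + sum f (\<Union>i\<in>F. B i)"
    using sum_Un_nat[of "B x" "\<Union>i\<in>F. B i" f] insert by auto
  also have "\<dots> \<le> sum f (B x) + (\<Sum>i\<in>F. sum f (B i))"
    using insert by simp
  finally show ?case using insert by simp
qed simp

definition moving_states :: "('q, 'a) nfa \<Rightarrow> 'q set \<Rightarrow> 'a \<Rightarrow> 'q set" where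
  "moving_states A S a = {q \<in> S. trans A q a \<noteq> {q}}"

lemma nfa_step_subset_states_above:
  assumes "rpoNFA A" "S \<subseteq> states A" "a \<in> alph A"
  shows "nfa_step A S a \<subseteq> (S - moving_states A S a) \<union> (\<Union>q\<in>moving_states A S a. states_above A q)"
proof
  fix p assume "p \<in> nfa_step A S a"
  then obtain q where q: "q \<in> S" "p \<in> trans A q a" by (auto simp: nfa_step_def)
  show "p \<in> (S - moving_states A S a) \<union> (\<Union>q\<in>moving_states A S a. states_above A q)"
  proof (cases "q \<in> moving_states A S a")
    case True
    then have "q \<in> states A" "trans A q a \<noteq> {q}" using assms(2) by (auto simp: moving_states_def)
    from trans_subset_states_above[OF assms(1) this(1) assms(3) this(2)] q(2) True show ?thesis
      by blast
  next
    case False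
    with q show ?thesis by (auto simp: moving_states_def)
  qed
qed

lemma moving_states_nonempty: "nfa_step A S a \<noteq> S \<Longrightarrow> moving_states A S a \<noteq> {}"
proof
  assume "moving_states A S a = {}"
  then have "nfa_step A S a = (\<Union>q\<in>S. {q})"
    unfolding nfa_step_def moving_states_def by (intro SUP_cong) auto
  moreover assume "nfa_step A S a \<noteq> S"
  ultimately show False by simp
qed

text \<open>A set-changing step replaces the moving states by states strictly above them.\<close>
lemma potential_nfa_step_less:
  assumes "rpoNFA A" "S \<subseteq> states A" "a \<in> alph A" "nfa_step A S a \<noteq> S"
  shows "potential A (nfa_step A S a) < potential A S"
proof -
  have po: "poNFA A" using assms(1) by (simp add: rpoNFA_def)
  then have nfa: "is_nfa A" by (simp add: poNFA_def)
  define X where "X = moving_states A S a"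
  have "finite S" using assms(2) nfa by (simp add: is_nfa_def finite_subset)
  then have fin: "finite S" "finite X" "finite (\<Union>x\<in>X. states_above A x)"
    using nfa by (simp_all add: X_def moving_states_def finite_states_above)
  have "potential A (nfa_step A S a) \<le> sum (weight A) ((S - X) \<union> (\<Union>x\<in>X. states_above A x))"
    unfolding potential_def X_def using nfa_step_subset_states_above[OF assms(1-3)] fin
    by (intro sum_mono2) (simp_all add: X_def)
  also have "\<dots> \<le> sum (weight A) (S - X) + sum (weight A) (\<Union>x\<in>X. states_above A x)"
    using sum_Un_nat[of "S - X" "\<Union>x\<in>X. states_above A x" "weight A"] fin by simp
  also have "\<dots> \<le> sum (weight A) (S - X) + (\<Sum>x\<in>X. sum (weight A) (states_above A x))"
    using fin nfa by (simp add: sum_UN_le_nat finite_states_above)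
  also have "\<dots> < sum (weight A) (S - X) + sum (weight A) X"
  proof -
    have "(\<Sum>x\<in>X. sum (weight A) (states_above A x)) < sum (weight A) X"
      using fin(2) moving_states_nonempty[OF assms(4)] unfolding X_def
    proof (rule sum_strict_mono)
      show "sum (weight A) (states_above A x) < weight A x" if "x \<in> moving_states A S a" for x
        using that assms(2) sum_weight_states_above_less[OF po] by (auto simp: moving_states_def)
    qed
    then show ?thesis by simp
  qed
  also have "\<dots> = potential A S"
    unfolding potential_def by (rule sum.subset_diff[symmetric]) (auto simp: X_def moving_states_def fin)
  finally show ?thesis .
qed

lemma exit_count_le_potential:
  assumes "rpoNFA A" "S \<subseteq> states A" "w \<in> lists (alph A)"
  shows "exit_count A S w \<le> potential A S"
  using assms(2,3)
proof (induction w arbitrary: S)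
  case Nil
  then show ?case by simp
next
  case (Cons a w)
  have "is_nfa A" using assms(1) by (simp add: rpoNFA_def poNFA_def)
  with Cons.prems have "nfa_step A S a \<subseteq> states A"
    unfolding is_nfa_def nfa_step_def by fastforce
  with Cons.prems Cons.IH have IH: "exit_count A (nfa_step A S a) w \<le> potential A (nfa_step A S a)"
    by simp
  show ?case
  proof (cases "nfa_step A S a = S")
    case True
    with IH show ?thesis by simp
  next
    case False
    with IH potential_nfa_step_less[OF assms(1) Cons.prems(1) _ False] Cons.prems(2)
    show ?thesis by simp
  qed
qed

lemma lang_subset_rexp_eq_steps:
  assumes "rpoNFA A" "S \<subseteq> states A" "potential A S < n"
  shows "lang (subset_rexp A n S) = {w \<in> lists (alph A). steps A S w \<inter> final A \<noteq> {}}"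
proof -
  have "finite (alph A)" using assms(1) by (simp add: rpoNFA_def poNFA_def is_nfa_def)
  moreover from this have "lang (subset_rexp A n S) \<subseteq> lists (alph A)"
    using lang_subset_lists_atoms atoms_subset_rexp by (metis lists_mono subset_trans)
  ultimately show ?thesis
    using lang_subset_rexp exit_count_le_potential[OF assms(1,2)] assms(3)
    by (fastforce intro: le_less_trans)
qed

theorem theorem12:
  fixes A :: "('q, 'a) nfa"
  assumes "rpoNFA A"
  shows "DRE_definable (alph A) (nfa_lang A)"
proof -
  have nfa: "is_nfa A" using assms by (simp add: rpoNFA_def poNFA_def)
  then have fin: "finite (alph A)" and init: "init A \<subseteq> states A"
    by (simp_all add: is_nfa_def)
  define r where "r = subset_rexp A (Suc (potential A (init A))) (init A)"
  have "atoms r \<subseteq> alph A"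
    unfolding r_def using fin by (rule atoms_subset_rexp)
  moreover have "deterministic r"
    unfolding deterministic_iff_deterministic_lang mark_def r_def
    using fin by (rule deterministic_lang_mark_subset_rexp)
  moreover have "lang r = nfa_lang A"
    unfolding r_def nfa_lang_def by (rule lang_subset_rexp_eq_steps[OF assms init]) simp
  ultimately show ?thesis unfolding DRE_definable_def by blast
qed

end
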